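(* Let $m\mid n$ with $n\ge 3$. Let $A(Y_0,\dots,Y_{m-1})\in\mathbb C[Y_0,\dots,Y_{m-1}]$ be such that for every $\sigma\in S_m$, $A(Y_{\sigma(0)},\dots,Y_{\sigma(m-1)})=\pm A(Y_0,\dots,Y_{m-1})$. Let $B(Z_0,\dots,Z_{n/m-1})\in\mathbb C[Z_0,\dots,Z_{n/m-1}]$ be symmetric, let $B_i=B(X_i,X_{i+m},\dots,X_{i+(n/m-1)m})$ for $0\le i\le m-1$, and let $F=A(B_0,\dots,B_{m-1})\in\mathbb C[X_0,\dots,X_{n-1}]$. Assume $\deg_{X_0}F(X_0,0,\dots,0)>0$. Then $\prod_{\phi\in\mathcal E_{n,m}}\phi(F)\in\mathbb C[X_0,\dots,X_{n-1}]$ is symmetric in $X_0,\dots,X_{n-1}$.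
   Context: The symmetric group $S_n$ of permutations of $\{0,1,\dots,n-1\}$ (identified with $\mathbb Z/n\mathbb Z$) acts on $\mathbb C[X_0,\dots,X_{n-1}]$ by permuting indices of the indeterminates. Partition $\{0,\dots,n-1\}$ into blocks $I_i=\{i+mj:0\le j\le n/m-1\}$, $0\le i\le m-1$. Let $\mathcal P_{n,m}$ be the set of all unordered partitions of $\{0,1,\dots,n-1\}$ into $m$ parts of size $n/m$. For each $\{P_0,\dots,P_{m-1}\}\in\mathcal P_{n,m}$ choose a permutation $\phi_{\{P_0,\dots,P_{m-1}\}}\in S_n$ mapping $I_i$ onto $P_i$ for $0\le i\le m-1$, and let $\mathcal E_{n,m}=\{\phi_{\{P_0,\dots,P_{m-1}\}}:\{P_0,\dots,P_{m-1}\}\in\mathcal P_{n,m}\}$; this is a left transversal in $S_n$ of the wreath product $S_m\wr S_{n/m}$, the subgroup of permutations that permute the blocks $I_i$ among themselves and permute elements within blocks. *)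

theory Defs
  imports "HOL-Library.Poly_Mapping" "HOL-Combinatorics.Permutations" "HOL-Library.Disjoint_Sets"
    Complex_Main
begin

text \<open>Multivariate polynomials over the complex numbers in indeterminates X_0, X_1, ...:
  a polynomial is a finitely supported map from monomials (finitely supported exponent
  vectors nat =>0 nat) to coefficients.\<close>

type_synonym mpoly = "(nat \<Rightarrow>\<^sub>0 nat) \<Rightarrow>\<^sub>0 complex"

definition Var :: "nat \<Rightarrow> mpoly" where
  "Var i = Poly_Mapping.single (Poly_Mapping.single i 1) 1"

definition Const :: "complex \<Rightarrow> mpoly" where
  "Const c = Poly_Mapping.single 0 c"

definition in_vars :: "nat \<Rightarrow> mpoly \<Rightarrow> bool" where
  "in_vars k p \<longleftrightarrow> (\<forall>mon \<in> Poly_Mapping.keys p. Poly_Mapping.keys mon \<subseteq> {..<k})"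

definition subst :: "(nat \<Rightarrow> mpoly) \<Rightarrow> mpoly \<Rightarrow> mpoly" where
  "subst g p = (\<Sum>mon \<in> Poly_Mapping.keys p.
      Const (Poly_Mapping.lookup p mon) *
      (\<Prod>i \<in> Poly_Mapping.keys mon. g i ^ Poly_Mapping.lookup mon i))"

definition rename :: "(nat \<Rightarrow> nat) \<Rightarrow> mpoly \<Rightarrow> mpoly" where
  "rename \<sigma> p = subst (\<lambda>i. Var (\<sigma> i)) p"

definition symmetric_in :: "nat \<Rightarrow> mpoly \<Rightarrow> bool" where
  "symmetric_in k p \<longleftrightarrow> (\<forall>\<sigma>. \<sigma> permutes {..<k} \<longrightarrow> rename \<sigma> p = p)"

definition deg_var :: "nat \<Rightarrow> mpoly \<Rightarrow> nat" where
  "deg_var i p = Max (insert 0 ((\<lambda>mon. Poly_Mapping.lookup mon i) ` Poly_Mapping.keys p))"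

definition block :: "nat \<Rightarrow> nat \<Rightarrow> nat \<Rightarrow> nat set" where
  "block n m i = {i + m * j | j. j < n div m}"

definition partitions_nm :: "nat \<Rightarrow> nat \<Rightarrow> nat set set set" where
  "partitions_nm n m = {Q. partition_on {..<n} Q \<and> card Q = m \<and> (\<forall>P\<in>Q. card P = n div m)}"

text \<open>phi is a valid choice of transversal representatives: for each partition Q,
  phi Q is a permutation of {0..n-1} mapping the blocks I_0..I_{m-1} onto the parts of Q
  (in some labelling P_i = phi Q ` I_i).\<close>
definition transversal_choice :: "nat \<Rightarrow> nat \<Rightarrow> (nat set set \<Rightarrow> nat \<Rightarrow> nat) \<Rightarrow> bool" where
  "transversal_choice n m \<phi> \<longleftrightarrow>
     (\<forall>Q \<in> partitions_nm n m. \<phi> Q permutes {..<n} \<and>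
        (\<lambda>i. \<phi> Q ` block n m i) ` {..<m} = Q)"

end

theory Submission
  imports Defs
begin

text \<open>Let W be the wreath product stabilising the blocks I_0, ..., I_{m-1}.  An element of W
  moves the B_i among themselves, up to a symmetry of each B_i, hence acts on
  F = A(B_0, ..., B_{m-1}) through a permutation of the variables of A, that is by a sign.
  Since sigma \<circ> phi_Q lies in the coset phi_{sigma Q} W, every sigma in S_n maps the product P
  of the phi_Q F to +P or -P.  The sign is excluded using n \<ge> 3: a transposition (a b) fixes
  some c outside {a, b}, so it does not change the specialisation of P in which all variables
  but X_c are set to 0.  That specialisation is nonzero, because F(X_0, 0, ..., 0) \<noteq> 0 and W
  acts transitively on {0, ..., n-1}.\<close>

subsection \<open>Substitution is a ring homomorphism\<close>

definition subst_monom :: "(nat \<Rightarrow> mpoly) \<Rightarrow> (nat \<Rightarrow>\<^sub>0 nat) \<Rightarrow> mpoly" where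
  "subst_monom g mon = (\<Prod>i \<in> Poly_Mapping.keys mon. g i ^ Poly_Mapping.lookup mon i)"

lemma Const_0 [simp]: "Const 0 = 0"
  by (simp add: Const_def)

lemma Const_add: "Const (a + b) = Const a + Const b"
  by (simp add: Const_def single_add)

lemma Const_mult: "Const (a * b) = Const a * Const b"
  by (simp add: Const_def mult_single)

lemma subst_eq_sum_superset:
  assumes "finite S" "Poly_Mapping.keys p \<subseteq> S"
  shows "subst g p = (\<Sum>mon \<in> S. Const (Poly_Mapping.lookup p mon) * subst_monom g mon)"
  unfolding subst_def subst_monom_def
  by (rule sum.mono_neutral_left) (use assms in \<open>auto simp: in_keys_iff\<close>)

lemma subst_monom_eq_prod_superset:
  assumes "finite S" "Poly_Mapping.keys mon \<subseteq> S"
  shows "subst_monom g mon = (\<Prod>i \<in> S. g i ^ Poly_Mapping.lookup mon i)"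
  unfolding subst_monom_def
  by (rule prod.mono_neutral_left) (use assms in \<open>auto simp: in_keys_iff\<close>)

lemma subst_monom_add: "subst_monom g (a + b) = subst_monom g a * subst_monom g b"
proof -
  let ?S = "Poly_Mapping.keys a \<union> Poly_Mapping.keys b"
  have "subst_monom g (a + b) = (\<Prod>i \<in> ?S. g i ^ Poly_Mapping.lookup (a + b) i)"
    by (rule subst_monom_eq_prod_superset) (auto simp: keys_add)
  also have "\<dots> = (\<Prod>i \<in> ?S. g i ^ Poly_Mapping.lookup a i) * (\<Prod>i \<in> ?S. g i ^ Poly_Mapping.lookup b i)"
    by (simp add: lookup_add power_add prod.distrib)
  also have "\<dots> = subst_monom g a * subst_monom g b"
    by (subst (1 2) subst_monom_eq_prod_superset[where S = ?S]) auto
  finally show ?thesis .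
qed

lemma subst_0 [simp]: "subst g 0 = 0"
  by (simp add: subst_def)

lemma subst_add: "subst g (p + q) = subst g p + subst g q"
proof -
  let ?S = "Poly_Mapping.keys p \<union> Poly_Mapping.keys q"
  let ?t = "\<lambda>r mon. Const (Poly_Mapping.lookup r mon) * subst_monom g mon"
  have "subst g (p + q) = (\<Sum>mon \<in> ?S. ?t (p + q) mon)"
    by (rule subst_eq_sum_superset) (auto simp: keys_add)
  also have "\<dots> = (\<Sum>mon \<in> ?S. ?t p mon) + (\<Sum>mon \<in> ?S. ?t q mon)"
    by (simp add: lookup_add Const_add distrib_right sum.distrib)
  also have "\<dots> = subst g p + subst g q"
    by (subst (1 2) subst_eq_sum_superset[where S = ?S]) auto
  finally show ?thesis .
qed

lemma subst_sum: "subst g (\<Sum>x\<in>X. f x) = (\<Sum>x\<in>X. subst g (f x))"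
  by (induction X rule: infinite_finite_induct) (auto simp: subst_add)

lemma subst_single: "subst g (Poly_Mapping.single mon c) = Const c * subst_monom g mon"
  by (subst subst_eq_sum_superset[where S = "{mon}"]) auto

lemma poly_mapping_eq_sum_single:
  "p = (\<Sum>a\<in>Poly_Mapping.keys p. Poly_Mapping.single a (Poly_Mapping.lookup p a))"
  by (rule poly_mapping_eqI)
    (auto simp: lookup_sum lookup_single when_def in_keys_iff sum.delta[OF finite_keys])

lemma subst_mult: "subst g (p * q) = subst g p * subst g q"
proof -
  let ?t = "\<lambda>r mon. Const (Poly_Mapping.lookup r mon) * subst_monom g mon"
  have "p * q = (\<Sum>a\<in>Poly_Mapping.keys p. \<Sum>b\<in>Poly_Mapping.keys q.
      Poly_Mapping.single (a + b) (Poly_Mapping.lookup p a * Poly_Mapping.lookup q b))"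
    by (subst (1) poly_mapping_eq_sum_single, subst (2) poly_mapping_eq_sum_single)
      (simp add: sum_product mult_single)
  then have "subst g (p * q) = (\<Sum>a\<in>Poly_Mapping.keys p. \<Sum>b\<in>Poly_Mapping.keys q. ?t p a * ?t q b)"
    by (simp add: subst_sum subst_single subst_monom_add Const_mult mult_ac)
  also have "\<dots> = subst g p * subst g q"
    by (simp add: subst_eq_sum_superset[OF finite_keys order_refl] sum_product)
  finally show ?thesis .
qed

lemma subst_1 [simp]: "subst g 1 = 1"
  using subst_single[of g 0 1] by (simp add: Const_def subst_monom_def)

lemma subst_uminus: "subst g (- p) = - subst g p"
  using subst_add[of g "- p" p] by (simp add: eq_neg_iff_add_eq_0)

lemma subst_power: "subst g (p ^ k) = subst g p ^ k"
  by (induction k) (auto simp: subst_mult)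

lemma subst_prod: "subst g (\<Prod>x\<in>X. f x) = (\<Prod>x\<in>X. subst g (f x))"
  by (induction X rule: infinite_finite_induct) (auto simp: subst_mult)

lemma subst_Var [simp]: "subst g (Var i) = g i"
  by (simp add: Var_def subst_single subst_monom_def Const_def)

lemma subst_Const [simp]: "subst g (Const c) = Const c"
  by (simp add: Const_def subst_single subst_monom_def)

lemma subst_subst: "subst g (subst h p) = subst (\<lambda>i. subst g (h i)) p"
  by (simp add: subst_def[of h] subst_def[of "\<lambda>i. subst g (h i)"]
      subst_sum subst_mult subst_prod subst_power)

lemma subst_cong_in_vars:
  assumes "in_vars k p" "\<And>i. i < k \<Longrightarrow> g i = g' i"
  shows "subst g p = subst g' p"
  using assms unfolding in_vars_def subst_def by (auto intro!: sum.cong prod.cong simp: subset_iff)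

lemma rename_rename: "rename \<sigma> (rename \<tau> p) = rename (\<sigma> \<circ> \<tau>) p"
  by (simp add: rename_def subst_subst)

lemma rename_uminus: "rename \<sigma> (- p) = - rename \<sigma> p"
  by (simp add: rename_def subst_uminus)

subsection \<open>The wreath product stabilising the blocks\<close>

lemma block_eq_residue_class:
  assumes "m dvd n" "0 < m" "i < m"
  shows "block n m i = {x. x < n \<and> x mod m = i}"
proof (intro set_eqI iffI)
  fix x assume "x \<in> block n m i"
  then obtain j where j: "x = i + m * j" "j < n div m" by (auto simp: block_def)
  have "i + m * j < m * (j + 1)" using assms by simp
  also have "\<dots> \<le> m * (n div m)" using j by (intro mult_le_mono2) simp
  also have "\<dots> = n" using assms by simp
  finally show "x \<in> {x. x < n \<and> x mod m = i}" using j assms by simp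
next
  fix x assume x: "x \<in> {x. x < n \<and> x mod m = i}"
  then have "x div m < n div m"
    using assms by (simp add: div_less_iff_less_mult)
  moreover have "x = i + m * (x div m)" using x mod_mult_div_eq[of x m] by simp
  ultimately show "x \<in> block n m i" unfolding block_def by blast
qed

text \<open>Since the blocks are the residue classes modulo m, their stabiliser S_m wr S_{n/m} is
  encoded as the set of permutations of {..<n} that preserve congruence modulo m.\<close>

definition wreath :: "nat \<Rightarrow> nat \<Rightarrow> (nat \<Rightarrow> nat) set" where
  "wreath n m = {\<tau>. \<tau> permutes {..<n} \<and>
     (\<forall>x<n. \<forall>y<n. x mod m = y mod m \<longleftrightarrow> \<tau> x mod m = \<tau> y mod m)}"

lemma add_mult_less_mult:
  fixes i j m k :: nat
  assumes "i < m" "j < k"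
  shows "i + m * j < m * k"
proof -
  have "i + m * j < m * Suc j" using assms by simp
  also have "\<dots> \<le> m * k" using assms by (intro mult_le_mono2) simp
  finally show ?thesis .
qed

lemma wreath_mod_perm:
  assumes "\<tau> \<in> wreath n m" "m dvd n" "0 < n"
  obtains \<pi> where "\<pi> permutes {..<m}" "\<And>x. x < n \<Longrightarrow> \<tau> x mod m = \<pi> (x mod m)"
proof -
  have m0: "0 < m" using assms(2,3) by (cases m) auto
  have m_le: "m \<le> n" using assms(2,3) by (simp add: dvd_imp_le)
  have cong: "\<And>x y. x < n \<Longrightarrow> y < n \<Longrightarrow> x mod m = y mod m \<longleftrightarrow> \<tau> x mod m = \<tau> y mod m"
    using assms(1) by (auto simp: wreath_def)
  define \<pi> where "\<pi> i = (if i < m then \<tau> i mod m else i)" for i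
  have "\<pi> permutes {..<m}"
  proof (rule inj_imp_permutes)
    show "inj_on \<pi> {..<m}"
    proof (rule inj_onI)
      fix i i' assume "i \<in> {..<m}" "i' \<in> {..<m}" "\<pi> i = \<pi> i'"
      then show "i = i'" using cong[of i i'] m_le by (simp add: \<pi>_def)
    qed
  qed (auto simp: \<pi>_def m0)
  moreover have "\<tau> x mod m = \<pi> (x mod m)" if "x < n" for x
  proof -
    have "x mod m < n" using m0 m_le by (meson mod_less_divisor order_less_le_trans)
    then show ?thesis using cong[OF that, of "x mod m"] m0 by (simp add: \<pi>_def)
  qed
  ultimately show ?thesis by (rule that)
qed

lemma wreath_decompose:
  assumes "\<tau> \<in> wreath n m" "m dvd n" "0 < n"
  obtains \<pi> \<rho> where "\<pi> permutes {..<m}" "\<And>i. i < m \<Longrightarrow> \<rho> i permutes {..<n div m}"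
    "\<And>i j. i < m \<Longrightarrow> j < n div m \<Longrightarrow> \<tau> (i + m * j) = \<pi> i + m * \<rho> i j"
proof -
  obtain \<pi> where \<pi>: "\<pi> permutes {..<m}" and \<tau>_mod: "\<And>x. x < n \<Longrightarrow> \<tau> x mod m = \<pi> (x mod m)"
    using wreath_mod_perm[OF assms] by blast
  define k where "k = n div m"
  have m0: "0 < m" using assms(2,3) by (cases m) auto
  have n_eq: "n = m * k" using assms(2) by (simp add: k_def)
  have \<tau>: "\<tau> permutes {..<n}" using assms(1) by (simp add: wreath_def)
  define \<rho> where "\<rho> i j = (if j < k then \<tau> (i + m * j) div m else j)" for i j
  have dec: "\<tau> (i + m * j) = \<pi> i + m * \<rho> i j" if "i < m" "j < k" for i j
  proof -
    have "i + m * j < n" using add_mult_less_mult[OF that] n_eq by simp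
    then have "\<tau> (i + m * j) mod m = \<pi> i" using \<tau>_mod that by simp
    moreover have "\<rho> i j = \<tau> (i + m * j) div m" using that by (simp add: \<rho>_def)
    ultimately show ?thesis by (metis mod_mult_div_eq)
  qed
  have \<rho>: "\<rho> i permutes {..<k}" if "i < m" for i
  proof (rule inj_imp_permutes)
    show "\<rho> i j \<in> {..<k}" if "j \<in> {..<k}" for j
    proof -
      have "i + m * j < m * k" using add_mult_less_mult[OF \<open>i < m\<close>] that by simp
      then have "\<tau> (i + m * j) < m * k" using permutes_in_image[OF \<tau>] n_eq by simp
      then show ?thesis using that m0 by (simp add: \<rho>_def div_less_iff_less_mult mult.commute)
    qed
    show "inj_on (\<rho> i) {..<k}"
    proof (rule inj_onI)
      fix j j' assume "j \<in> {..<k}" "j' \<in> {..<k}" "\<rho> i j = \<rho> i j'"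
      then have "\<tau> (i + m * j) = \<tau> (i + m * j')" using dec[OF that] by simp
      then show "j = j'" using permutes_inj[OF \<tau>] m0 by (simp add: inj_eq)
    qed
  qed (auto simp: \<rho>_def)
  show ?thesis using \<pi> \<rho> dec unfolding k_def by (rule that)
qed

definition block_subst :: "nat \<Rightarrow> mpoly \<Rightarrow> mpoly \<Rightarrow> mpoly" where
  "block_subst m A B = subst (\<lambda>i. subst (\<lambda>j. Var (i + m * j)) B) A"

definition symmetric_up_to_sign :: "nat \<Rightarrow> mpoly \<Rightarrow> bool" where
  "symmetric_up_to_sign k p \<longleftrightarrow>
     (\<forall>\<sigma>. \<sigma> permutes {..<k} \<longrightarrow> rename \<sigma> p = p \<or> rename \<sigma> p = - p)"

lemma rename_block_subst_wreath:
  assumes "\<tau> \<in> wreath n m" "m dvd n" "0 < n"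
    and "in_vars m A" "symmetric_up_to_sign m A"
    and "in_vars (n div m) B" "symmetric_in (n div m) B"
  shows "rename \<tau> (block_subst m A B) = block_subst m A B \<or>
         rename \<tau> (block_subst m A B) = - block_subst m A B"
proof -
  obtain \<pi> \<rho> where \<pi>: "\<pi> permutes {..<m}" and \<rho>: "\<And>i. i < m \<Longrightarrow> \<rho> i permutes {..<n div m}"
    and dec: "\<And>i j. i < m \<Longrightarrow> j < n div m \<Longrightarrow> \<tau> (i + m * j) = \<pi> i + m * \<rho> i j"
    using wreath_decompose[OF assms(1-3)] by blast
  define Bs where "Bs i = subst (\<lambda>j. Var (i + m * j)) B" for i
  have rename_Bs: "rename \<tau> (Bs i) = Bs (\<pi> i)" if "i < m" for i
  proof -
    have "rename \<tau> (Bs i) = subst (\<lambda>j. Var (\<tau> (i + m * j))) B"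
      by (simp add: rename_def Bs_def subst_subst)
    also have "\<dots> = subst (\<lambda>j. Var (\<pi> i + m * \<rho> i j)) B"
      by (rule subst_cong_in_vars[OF assms(6)]) (simp add: dec that)
    also have "\<dots> = subst (\<lambda>j. Var (\<pi> i + m * j)) (rename (\<rho> i) B)"
      by (simp add: rename_def subst_subst)
    also have "\<dots> = Bs (\<pi> i)"
      using assms(7) \<rho>[OF that] by (simp add: symmetric_in_def Bs_def)
    finally show ?thesis .
  qed
  have "rename \<tau> (block_subst m A B) = subst (\<lambda>i. rename \<tau> (Bs i)) A"
    by (simp add: block_subst_def Bs_def rename_def subst_subst)
  also have "\<dots> = subst (\<lambda>i. Bs (\<pi> i)) A"
    by (rule subst_cong_in_vars[OF assms(4)]) (simp add: rename_Bs)
  also have "\<dots> = subst Bs (rename \<pi> A)"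
    by (simp add: rename_def subst_subst)
  finally have "rename \<tau> (block_subst m A B) = subst Bs (rename \<pi> A)" .
  moreover have "block_subst m A B = subst Bs A" by (simp add: block_subst_def Bs_def[abs_def])
  moreover have "rename \<pi> A = A \<or> rename \<pi> A = - A"
    using assms(5) \<pi> by (simp add: symmetric_up_to_sign_def)
  ultimately show ?thesis by (auto simp: subst_uminus)
qed

lemma wreath_if_maps_blocks_to_blocks:
  assumes "m dvd n" "0 < m" "\<tau> permutes {..<n}"
    and blocks: "\<And>i. i < m \<Longrightarrow> \<exists>i'<m. \<tau> ` block n m i = block n m i'"
  shows "\<tau> \<in> wreath n m"
proof -
  have in_block: "x \<in> block n m (x mod m)" if "x < n" for x
    using block_eq_residue_class[OF assms(1,2), of "x mod m"] that assms(2) by simp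
  have block_mod: "x mod m = i" if "x \<in> block n m i" "i < m" for x i
    using block_eq_residue_class[OF assms(1,2) that(2)] that(1) by simp
  have image_block: "\<tau> ` block n m (x mod m) = block n m (\<tau> x mod m)" if "x < n" for x
  proof -
    obtain i' where i': "i' < m" "\<tau> ` block n m (x mod m) = block n m i'"
      using blocks[of "x mod m"] assms(2) by auto
    have "\<tau> x \<in> block n m i'" using i'(2) in_block[OF that] by blast
    then have "\<tau> x mod m = i'" using i'(1) by (rule block_mod)
    then show ?thesis using i'(2) by simp
  qed
  have "x mod m = y mod m \<longleftrightarrow> \<tau> x mod m = \<tau> y mod m" if "x < n" "y < n" for x y
  proof
    assume "\<tau> x mod m = \<tau> y mod m"
    then have "\<tau> ` block n m (x mod m) = \<tau> ` block n m (y mod m)"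
      using image_block that by simp
    then have "block n m (x mod m) = block n m (y mod m)"
      using permutes_inj[OF assms(3)] by (simp add: inj_image_eq_iff)
    then have "x \<in> block n m (y mod m)" using in_block[OF that(1)] by simp
    then show "x mod m = y mod m" by (rule block_mod) (simp add: assms(2))
  next
    assume "x mod m = y mod m"
    then have "\<tau> y \<in> \<tau> ` block n m (x mod m)" using in_block[OF that(2)] by simp
    then have "\<tau> y \<in> block n m (\<tau> x mod m)" using image_block[OF that(1)] by simp
    then have "\<tau> y mod m = \<tau> x mod m" by (rule block_mod) (simp add: assms(2))
    then show "\<tau> x mod m = \<tau> y mod m" by simp
  qed
  then show ?thesis using assms(3) by (simp add: wreath_def)
qed

lemma wreath_product_perm:
  assumes "0 < m" "\<alpha> permutes {..<m}" "\<beta> permutes {..<k}"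
  shows "(\<lambda>x. if x < m * k then \<alpha> (x mod m) + m * \<beta> (x div m) else x) \<in> wreath (m * k) m"
    (is "?\<tau> \<in> _")
proof -
  have mod_div: "?\<tau> x mod m = \<alpha> (x mod m)" "?\<tau> x div m = \<beta> (x div m)" "?\<tau> x < m * k"
    if "x < m * k" for x
  proof -
    have "\<alpha> (x mod m) < m" using permutes_in_image[OF assms(2)] assms(1) by simp
    moreover have "\<beta> (x div m) < k"
      using permutes_in_image[OF assms(3)] that assms(1) by (simp add: div_less_iff_less_mult mult.commute)
    ultimately show "?\<tau> x mod m = \<alpha> (x mod m)" "?\<tau> x div m = \<beta> (x div m)" "?\<tau> x < m * k"
      using that assms(1) add_mult_less_mult by simp_all
  qed
  have inj: "inj \<alpha>" "inj \<beta>" using assms(2,3) by (simp_all add: permutes_inj)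
  have "?\<tau> permutes {..<m * k}"
  proof (rule inj_imp_permutes)
    show "inj_on ?\<tau> {..<m * k}"
    proof (rule inj_onI)
      fix x y assume "x \<in> {..<m * k}" "y \<in> {..<m * k}" "?\<tau> x = ?\<tau> y"
      then have "\<alpha> (x mod m) = \<alpha> (y mod m)" "\<beta> (x div m) = \<beta> (y div m)"
        using mod_div(1,2)[of x] mod_div(1,2)[of y] by simp_all
      then have "x mod m = y mod m" "x div m = y div m" using inj by (simp_all add: inj_eq)
      then show "x = y" by (metis mod_mult_div_eq)
    qed
  qed (use mod_div in auto)
  moreover have "x mod m = y mod m \<longleftrightarrow> ?\<tau> x mod m = ?\<tau> y mod m" if "x < m * k" "y < m * k" for x y
    using mod_div(1)[OF that(1)] mod_div(1)[OF that(2)] inj(1) by (simp add: inj_eq)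
  ultimately show ?thesis by (simp add: wreath_def)
qed

lemma wreath_transitive:
  assumes "m dvd n" "0 < m" "c < n"
  obtains \<tau> where "\<tau> \<in> wreath n m" "\<tau> 0 = c"
proof -
  define k where "k = n div m"
  have n_eq: "n = m * k" using assms(1) by (simp add: k_def)
  have "c div m < k" using assms n_eq by (simp add: div_less_iff_less_mult mult.commute)
  then have "Transposition.transpose 0 (c div m) permutes {..<k}"
    by (intro permutes_swap_id) auto
  moreover have "Transposition.transpose 0 (c mod m) permutes {..<m}"
    using assms(2) by (intro permutes_swap_id) auto
  ultimately have "(\<lambda>x. if x < m * k then Transposition.transpose 0 (c mod m) (x mod m) +
      m * Transposition.transpose 0 (c div m) (x div m) else x) \<in> wreath n m"
      (is "?\<tau> \<in> _")
    using wreath_product_perm[OF assms(2)] n_eq by simp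
  moreover have "?\<tau> 0 = c" using assms n_eq by (cases "k = 0") auto
  ultimately show ?thesis by (rule that)
qed

subsection \<open>The transversal product\<close>

lemma image_partitions_nm:
  assumes "Q \<in> partitions_nm n m" "\<sigma> permutes {..<n}"
  shows "(`) \<sigma> ` Q \<in> partitions_nm n m"
proof -
  have inj: "inj \<sigma>" using assms(2) by (rule permutes_inj)
  have Q: "partition_on {..<n} Q" "card Q = m" "\<forall>P\<in>Q. card P = n div m"
    using assms(1) by (auto simp: partitions_nm_def)
  have "partition_on (\<sigma> ` {..<n}) ((`) \<sigma> ` Q - {{}})"
    by (rule partition_on_inj_image[OF Q(1)]) (use inj in \<open>auto intro: inj_on_subset\<close>)
  moreover have "\<sigma> ` {..<n} = {..<n}" using assms(2) by (rule permutes_image)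
  moreover have "(`) \<sigma> ` Q - {{}} = (`) \<sigma> ` Q" using partition_onD3[OF Q(1)] by auto
  moreover have "inj_on ((`) \<sigma>) Q" using inj by (simp add: inj_on_def inj_image_eq_iff)
  ultimately show ?thesis
    using Q inj by (auto simp: partitions_nm_def card_image inj_on_subset)
qed

lemma finite_partitions_nm: "finite (partitions_nm n m)"
proof (rule finite_subset)
  show "partitions_nm n m \<subseteq> Pow (Pow {..<n})"
    unfolding partitions_nm_def using partition_onD1 by fastforce
qed simp

lemma transversal_choice_permutes:
  assumes "transversal_choice n m \<phi>" "Q \<in> partitions_nm n m"
  shows "\<phi> Q permutes {..<n}"
  using assms by (simp add: transversal_choice_def)

lemma transversal_choice_inj_on:
  assumes "transversal_choice n m \<phi>"
  shows "inj_on \<phi> (partitions_nm n m)"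
proof (rule inj_onI)
  fix Q Q' assume "Q \<in> partitions_nm n m" "Q' \<in> partitions_nm n m" "\<phi> Q = \<phi> Q'"
  then show "Q = Q'" using assms unfolding transversal_choice_def by metis
qed

lemma transversal_choice_coset:
  assumes "transversal_choice n m \<phi>" "m dvd n" "0 < m"
    and "Q \<in> partitions_nm n m" "\<sigma> permutes {..<n}"
  obtains \<tau> where "\<tau> \<in> wreath n m" "\<sigma> \<circ> \<phi> Q = \<phi> ((`) \<sigma> ` Q) \<circ> \<tau>"
proof -
  define Q' where "Q' = (`) \<sigma> ` Q"
  have Q': "Q' \<in> partitions_nm n m" unfolding Q'_def using image_partitions_nm assms(4,5) by blast
  have \<phi>: "\<phi> Q permutes {..<n}" "(\<lambda>i. \<phi> Q ` block n m i) ` {..<m} = Q"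
    and \<phi>': "\<phi> Q' permutes {..<n}" "(\<lambda>i. \<phi> Q' ` block n m i) ` {..<m} = Q'"
    using assms(1,4) Q' by (auto simp: transversal_choice_def)
  define \<tau> where "\<tau> = inv (\<phi> Q') \<circ> \<sigma> \<circ> \<phi> Q"
  have "\<tau> \<in> wreath n m"
  proof (rule wreath_if_maps_blocks_to_blocks[OF assms(2,3)])
    show "\<tau> permutes {..<n}" unfolding \<tau>_def
      by (intro permutes_compose permutes_inv \<phi>(1) \<phi>'(1) assms(5))
    fix i assume "i < m"
    then have "\<sigma> ` \<phi> Q ` block n m i \<in> Q'" using \<phi>(2) by (auto simp: Q'_def)
    then have "\<sigma> ` \<phi> Q ` block n m i \<in> (\<lambda>i. \<phi> Q' ` block n m i) ` {..<m}"
      using \<phi>'(2) by simp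
    then obtain i' where "i' < m" "\<sigma> ` \<phi> Q ` block n m i = \<phi> Q' ` block n m i'"
      by auto
    moreover have "\<tau> ` block n m i = inv (\<phi> Q') ` \<sigma> ` \<phi> Q ` block n m i"
      by (simp add: \<tau>_def image_comp)
    ultimately show "\<exists>i'<m. \<tau> ` block n m i = block n m i'"
      by (auto simp: image_image permutes_inverses(2)[OF \<phi>'(1)])
  qed
  moreover have "\<sigma> \<circ> \<phi> Q = \<phi> Q' \<circ> \<tau>"
    by (simp add: fun_eq_iff \<tau>_def permutes_inverses(1)[OF \<phi>'(1)])
  ultimately show ?thesis using that unfolding Q'_def by blast
qed

lemma bij_betw_image_partitions_nm:
  assumes "\<sigma> permutes {..<n}"
  shows "bij_betw (\<lambda>Q. (`) \<sigma> ` Q) (partitions_nm n m) (partitions_nm n m)"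
proof (rule bij_betw_byWitness[where f' = "\<lambda>Q. (`) (inv \<sigma>) ` Q"])
  show "\<forall>Q\<in>partitions_nm n m. (`) (inv \<sigma>) ` (`) \<sigma> ` Q = Q"
    by (simp add: image_image permutes_inverses(2)[OF assms])
  show "\<forall>Q\<in>partitions_nm n m. (`) \<sigma> ` (`) (inv \<sigma>) ` Q = Q"
    by (simp add: image_image permutes_inverses(1)[OF assms])
qed (use image_partitions_nm assms permutes_inv[OF assms] in auto)

lemma prod_bij_betw_up_to_sign:
  fixes f h :: "'a \<Rightarrow> 'b::comm_ring_1"
  assumes "bij_betw g I I" "\<And>i. i \<in> I \<Longrightarrow> h i = f (g i) \<or> h i = - f (g i)"
  shows "prod h I = prod f I \<or> prod h I = - prod f I"
proof -
  define s where "s i = (if h i = f (g i) then 1 else - 1 :: 'b)" for i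
  have "prod h I = prod (\<lambda>i. s i * f (g i)) I"
    using assms(2) by (intro prod.cong) (auto simp: s_def)
  also have "\<dots> = prod s I * prod f I"
    by (simp add: prod.distrib prod.reindex_bij_betw[OF assms(1)])
  finally have "prod h I = prod s I * prod f I" .
  moreover have "prod s J = 1 \<or> prod s J = - 1" for J
    by (induction J rule: infinite_finite_induct) (auto simp: s_def)
  ultimately show ?thesis by (metis mult_1_left mult_minus1)
qed

lemma transversal_product_symmetric_up_to_sign:
  assumes "transversal_choice n m \<phi>" "m dvd n" "0 < m"
    and F: "\<forall>\<tau>\<in>wreath n m. rename \<tau> F = F \<or> rename \<tau> F = - F"
  shows "symmetric_up_to_sign n (\<Prod>\<psi> \<in> \<phi> ` partitions_nm n m. rename \<psi> F)"
  unfolding symmetric_up_to_sign_def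
proof (intro allI impI)
  fix \<sigma> assume \<sigma>: "\<sigma> permutes {..<n}"
  have "rename \<sigma> (rename (\<phi> Q) F) = rename (\<phi> ((`) \<sigma> ` Q)) F \<or>
        rename \<sigma> (rename (\<phi> Q) F) = - rename (\<phi> ((`) \<sigma> ` Q)) F"
    if Q: "Q \<in> partitions_nm n m" for Q
  proof -
    obtain \<tau> where \<tau>: "\<tau> \<in> wreath n m" and coset: "\<sigma> \<circ> \<phi> Q = \<phi> ((`) \<sigma> ` Q) \<circ> \<tau>"
      using transversal_choice_coset[OF assms(1-3) Q \<sigma>] .
    have "rename \<sigma> (rename (\<phi> Q) F) = rename (\<phi> ((`) \<sigma> ` Q)) (rename \<tau> F)"
      by (simp add: rename_rename coset)
    then show ?thesis using F \<tau> by (auto simp: rename_uminus)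
  qed
  then have "(\<Prod>Q \<in> partitions_nm n m. rename \<sigma> (rename (\<phi> Q) F)) = (\<Prod>Q \<in> partitions_nm n m. rename (\<phi> Q) F) \<or>
      (\<Prod>Q \<in> partitions_nm n m. rename \<sigma> (rename (\<phi> Q) F)) = - (\<Prod>Q \<in> partitions_nm n m. rename (\<phi> Q) F)"
    by (intro prod_bij_betw_up_to_sign[OF bij_betw_image_partitions_nm[OF \<sigma>]])
  then show "rename \<sigma> (\<Prod>\<psi> \<in> \<phi> ` partitions_nm n m. rename \<psi> F) = (\<Prod>\<psi> \<in> \<phi> ` partitions_nm n m. rename \<psi> F) \<or>
      rename \<sigma> (\<Prod>\<psi> \<in> \<phi> ` partitions_nm n m. rename \<psi> F) = - (\<Prod>\<psi> \<in> \<phi> ` partitions_nm n m. rename \<psi> F)"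
    by (simp add: prod.reindex[OF transversal_choice_inj_on[OF assms(1)]] rename_def subst_prod)
qed

subsection \<open>Excluding the sign\<close>

definition keep_var :: "nat \<Rightarrow> mpoly \<Rightarrow> mpoly" where
  "keep_var c p = subst (\<lambda>i. if i = c then Var 0 else 0) p"

lemma keep_var_uminus: "keep_var c (- p) = - keep_var c p"
  by (simp add: keep_var_def subst_uminus)

lemma keep_var_rename:
  assumes "inj \<psi>" "\<psi> d = c"
  shows "keep_var c (rename \<psi> p) = keep_var d p"
proof -
  have "\<psi> i = c \<longleftrightarrow> i = d" for i using assms by (auto simp: inj_eq)
  then show ?thesis by (simp add: keep_var_def rename_def subst_subst)
qed

lemma keep_var_rename_nonzero:
  assumes "m dvd n" "0 < m" "\<psi> permutes {..<n}" "c < n"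
    and F: "\<forall>\<tau>\<in>wreath n m. rename \<tau> F = F \<or> rename \<tau> F = - F" "keep_var 0 F \<noteq> 0"
  shows "keep_var c (rename \<psi> F) \<noteq> 0"
proof -
  have "inv \<psi> c < n" using permutes_in_image[OF permutes_inv[OF assms(3)]] assms(4) by simp
  then obtain \<tau> where \<tau>: "\<tau> \<in> wreath n m" "\<tau> 0 = inv \<psi> c"
    using wreath_transitive[OF assms(1,2)] by blast
  have "\<tau> permutes {..<n}" using \<tau>(1) by (simp add: wreath_def)
  then have "inj (\<psi> \<circ> \<tau>)" by (intro inj_compose permutes_inj[OF assms(3)] permutes_inj)
  moreover have "(\<psi> \<circ> \<tau>) 0 = c" using \<tau>(2) permutes_inverses(1)[OF assms(3)] by simp
  ultimately have "keep_var c (rename \<psi> (rename \<tau> F)) = keep_var 0 F"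
    by (simp add: rename_rename keep_var_rename)
  then show ?thesis using F \<tau>(1) by (auto simp: rename_uminus keep_var_uminus)
qed

lemma symmetric_if_symmetric_up_to_sign:
  assumes "3 \<le> n" "symmetric_up_to_sign n P" "\<And>c. c < n \<Longrightarrow> keep_var c P \<noteq> 0"
  shows "symmetric_in n P"
proof -
  have fixes_P: "rename \<tau> P = P" if \<tau>: "\<tau> permutes {..<n}" and c: "c < n" "\<tau> c = c" for \<tau> c
  proof (rule ccontr)
    assume "rename \<tau> P \<noteq> P"
    then have "rename \<tau> P = - P" using assms(2) \<tau> by (auto simp: symmetric_up_to_sign_def)
    moreover have "keep_var c (rename \<tau> P) = keep_var c P"
      using keep_var_rename[OF permutes_inj[OF \<tau>] c(2)] .
    ultimately have "keep_var c P = 0" by (simp add: keep_var_uminus)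
    with assms(3) c(1) show False by blast
  qed
  show ?thesis unfolding symmetric_in_def
  proof (intro allI impI)
    fix \<sigma> assume "\<sigma> permutes {..<n}"
    then show "rename \<sigma> P = P" using finite_lessThan
    proof (induction \<sigma> rule: permutes_induct)
      case id
      show ?case by (rule fixes_P[OF permutes_id, of 0]) (use assms(1) in auto)
    next
      case (swap a b \<sigma>)
      have "\<exists>c::nat. c < 3 \<and> c \<noteq> a \<and> c \<noteq> b" by presburger
      then obtain c where c: "c < 3" "c \<noteq> a" "c \<noteq> b" by blast
      have "rename (Transposition.transpose a b) P = P"
        by (rule fixes_P[of _ c]) (use swap(1,2) c assms(1) in \<open>auto intro: permutes_swap_id\<close>)
      then show ?case using swap.IH by (metis rename_rename)
    qed
  qed
qed

theorem lemma5p2: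
  fixes n m :: nat and A B :: mpoly and \<phi> :: "nat set set \<Rightarrow> nat \<Rightarrow> nat"
  assumes "m dvd n" and "n \<ge> 3"
    and "in_vars m A"
    and "\<forall>\<sigma>. \<sigma> permutes {..<m} \<longrightarrow> rename \<sigma> A = A \<or> rename \<sigma> A = - A"
    and "in_vars (n div m) B" and "symmetric_in (n div m) B"
    and "transversal_choice n m \<phi>"
  defines "F \<equiv> subst (\<lambda>i. subst (\<lambda>j. Var (i + m * j)) B) A"
  assumes "deg_var 0 (subst (\<lambda>i. if i = 0 then Var 0 else 0) F) > 0"
  shows "symmetric_in n (\<Prod>\<psi> \<in> \<phi> ` partitions_nm n m. rename \<psi> F)"
proof -
  let ?P = "\<Prod>\<psi> \<in> \<phi> ` partitions_nm n m. rename \<psi> F"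
  have m: "0 < m" using assms(1,2) by (cases m) auto
  have F_wreath: "\<forall>\<tau>\<in>wreath n m. rename \<tau> F = F \<or> rename \<tau> F = - F"
    using rename_block_subst_wreath[OF _ assms(1) _ assms(3) _ assms(5,6)] assms(2,4)
    unfolding F_def block_subst_def symmetric_up_to_sign_def by simp
  have F_nonzero: "keep_var 0 F \<noteq> 0"
    using assms(9) by (auto simp: keep_var_def deg_var_def)
  have "keep_var c ?P \<noteq> 0" if "c < n" for c
  proof -
    have "keep_var c ?P = (\<Prod>\<psi> \<in> \<phi> ` partitions_nm n m. keep_var c (rename \<psi> F))"
      by (simp add: keep_var_def subst_prod)
    moreover have "keep_var c (rename \<psi> F) \<noteq> 0" if "\<psi> \<in> \<phi> ` partitions_nm n m" for \<psi>
      using that keep_var_rename_nonzero[OF assms(1) m _ \<open>c < n\<close> F_wreath F_nonzero]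
        transversal_choice_permutes[OF assms(7)] by blast
    ultimately show ?thesis by (simp add: finite_partitions_nm)
  qed
  moreover have "symmetric_up_to_sign n ?P"
    by (rule transversal_product_symmetric_up_to_sign[OF assms(7,1) m F_wreath])
  ultimately show ?thesis using symmetric_if_symmetric_up_to_sign[OF assms(2)] by blast
qed

end
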